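(* Let $K$ be a field of characteristic $\neq 2$, $n\ge1$, and let $\mathcal C$ be any EACP over $K$. Then $\mathcal C$ is not unital, i.e. there is no $e\in\mathcal C$ with $ex=x=xe$ for all $x\in\mathcal C$.
   Context: An EACP over a field $K$ (characteristic $\neq 2$) is a $K$-algebra $\mathcal C$ with a basis $\{h_1,\dots,h_n,r\}$ (called a natural basis) whose multiplication is determined by bilinearity from $$h_ir=rh_i=\tfrac12\Big(\sum_{j=1}^n a_{ij}h_j+b_ir\Big),\qquad h_ih_j=0\ (i,j=1,\dots,n),\qquad rr=0,$$ for some constants $a_{ij},b_i\in K$. *)

theory Defs
  imports Main
begin

text \<open>Coordinate model of an EACP with natural basis h_1,...,h_n, r over a field 'a.
  Basis labels: Some i stands for h_i (1 \<le> i \<le> n), None stands for r.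
  An element of the algebra is its coordinate vector, a function from labels
  to 'a vanishing outside the basis labels.\<close>

definition eacp_basis :: "nat \<Rightarrow> nat option set" where
  "eacp_basis n = insert None (Some ` {1..n})"

definition eacp_carrier :: "nat \<Rightarrow> (nat option \<Rightarrow> 'a::zero) set" where
  "eacp_carrier n = {x. \<forall>k. k \<notin> eacp_basis n \<longrightarrow> x k = 0}"

text \<open>Structure constants: the product of two basis vectors, as a coordinate vector.
  h_i r = r h_i = (1/2)(sum_j a i j h_j + b i r), h_i h_j = 0, r r = 0.\<close>

definition eacp_table ::
  "(nat \<Rightarrow> nat \<Rightarrow> 'a::field) \<Rightarrow> (nat \<Rightarrow> 'a) \<Rightarrow> nat option \<Rightarrow> nat option \<Rightarrow> nat option \<Rightarrow> 'a" where
  "eacp_table a b p q k =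
     (case (p, q) of
        (Some i, None) \<Rightarrow> (case k of Some j \<Rightarrow> a i j / 2 | None \<Rightarrow> b i / 2)
      | (None, Some i) \<Rightarrow> (case k of Some j \<Rightarrow> a i j / 2 | None \<Rightarrow> b i / 2)
      | _ \<Rightarrow> 0)"

definition eacp_mult ::
  "nat \<Rightarrow> (nat \<Rightarrow> nat \<Rightarrow> 'a::field) \<Rightarrow> (nat \<Rightarrow> 'a) \<Rightarrow>
   (nat option \<Rightarrow> 'a) \<Rightarrow> (nat option \<Rightarrow> 'a) \<Rightarrow> (nat option \<Rightarrow> 'a)" where
  "eacp_mult n a b x y =
     (\<lambda>k. if k \<in> eacp_basis n
          then (\<Sum>p\<in>eacp_basis n. \<Sum>q\<in>eacp_basis n. x p * y q * eacp_table a b p q k)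
          else 0)"

end

theory Submission
  imports Defs
begin

text \<open>Suppose e is a left unit and write \<epsilon> for its r-coordinate. Since h_i h_j = 0, the
  product e h_i only sees \<epsilon>, so e h_1 = h_1 forces \<epsilon> \<noteq> 0 and e h_i = h_i then forces
  b_i / 2 = 0 for all i. But the r-coordinate of e r is \<Sum>_i e_{h_i} b_i / 2 = 0, so e r \<noteq> r.\<close>

definition eacp_basis_vector :: "nat option \<Rightarrow> nat option \<Rightarrow> 'a::field" where
  "eacp_basis_vector p = (\<lambda>k. if k = p then 1 else 0)"

lemma eacp_basis_vector_in_carrier:
  "p \<in> eacp_basis n \<Longrightarrow> eacp_basis_vector p \<in> eacp_carrier n"
  unfolding eacp_carrier_def eacp_basis_vector_def by auto

lemma finite_eacp_basis: "finite (eacp_basis n)"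
  unfolding eacp_basis_def by simp

lemma None_in_eacp_basis: "None \<in> eacp_basis n"
  unfolding eacp_basis_def by simp

lemma Some_in_eacp_basis_iff: "Some i \<in> eacp_basis n \<longleftrightarrow> i \<in> {1..n}"
  unfolding eacp_basis_def by auto

lemma sum_eacp_basis:
  "(\<Sum>p\<in>eacp_basis n. f p) = f None + (\<Sum>i\<in>{1..n}. f (Some i))"
  unfolding eacp_basis_def by (simp add: sum.reindex)

lemma eacp_mult_basis_vector:
  assumes "q \<in> eacp_basis n" "k \<in> eacp_basis n"
  shows "eacp_mult n a b x (eacp_basis_vector q) k
           = (\<Sum>p\<in>eacp_basis n. x p * eacp_table a b p q k)"
proof -
  have "(\<Sum>q'\<in>eacp_basis n. x p * eacp_basis_vector q q' * eacp_table a b p q' k)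
          = x p * eacp_table a b p q k" for p
    using assms(1) finite_eacp_basis[of n]
    by (simp add: eacp_basis_vector_def if_distrib[where f="\<lambda>z. x _ * z * _"] sum.delta'
        cong: if_cong)
  then show ?thesis
    using assms(2) by (simp add: eacp_mult_def)
qed

lemma eacp_mult_h:
  assumes "i \<in> {1..n}" "k \<in> eacp_basis n"
  shows "eacp_mult n a b x (eacp_basis_vector (Some i)) k
           = x None * eacp_table a b None (Some i) k"
  using assms by (simp add: eacp_mult_basis_vector Some_in_eacp_basis_iff sum_eacp_basis
      eacp_table_def)

lemma eacp_mult_r_coord_r:
  "eacp_mult n a b x (eacp_basis_vector None) None = (\<Sum>i\<in>{1..n}. x (Some i) * (b i / 2))"
  by (simp add: eacp_mult_basis_vector None_in_eacp_basis sum_eacp_basis eacp_table_def)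

lemma eacp_left_unit_coord_r_nonzero:
  assumes "eacp_mult n a b e (eacp_basis_vector (Some i)) = eacp_basis_vector (Some i)"
    and "i \<in> {1..n}"
  shows "e None \<noteq> 0"
proof
  assume "e None = 0"
  then have "eacp_mult n a b e (eacp_basis_vector (Some i)) (Some i) = 0"
    using assms(2) by (simp add: eacp_mult_h Some_in_eacp_basis_iff)
  then show False
    using assms(1) by (simp add: eacp_basis_vector_def)
qed

lemma eacp_left_unit_halved_b_zero:
  assumes "eacp_mult n a b e (eacp_basis_vector (Some i)) = eacp_basis_vector (Some i)"
    and "i \<in> {1..n}"
  shows "b i / 2 = 0"
proof -
  have "e None * (b i / 2) = eacp_mult n a b e (eacp_basis_vector (Some i)) None"
    using assms(2) by (simp add: eacp_mult_h None_in_eacp_basis eacp_table_def)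
  also have "\<dots> = 0"
    using assms(1) by (simp add: eacp_basis_vector_def)
  finally show ?thesis
    using eacp_left_unit_coord_r_nonzero[OF assms] by simp
qed

theorem eacp_no_left_unit:
  fixes a :: "nat \<Rightarrow> nat \<Rightarrow> 'a::field"
  assumes "n \<ge> 1"
  shows "\<not> (\<exists>e \<in> eacp_carrier n. \<forall>x \<in> eacp_carrier n. eacp_mult n a b e x = x)"
proof
  assume "\<exists>e \<in> eacp_carrier n. \<forall>x \<in> eacp_carrier n. eacp_mult n a b e x = x"
  then obtain e where unit: "\<And>p. p \<in> eacp_basis n \<Longrightarrow>
      eacp_mult n a b e (eacp_basis_vector p) = eacp_basis_vector p"
    using eacp_basis_vector_in_carrier by blast
  have "b i / 2 = 0" if "i \<in> {1..n}" for i
    using that eacp_left_unit_halved_b_zero[OF unit] by (simp add: Some_in_eacp_basis_iff)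
  then have "eacp_mult n a b e (eacp_basis_vector None) None = 0"
    unfolding eacp_mult_r_coord_r by (intro sum.neutral) simp
  then show False
    using unit[OF None_in_eacp_basis] by (simp add: eacp_basis_vector_def)
qed

theorem mainTheorem5:
  fixes n :: nat and a :: "nat \<Rightarrow> nat \<Rightarrow> 'a::field" and b :: "nat \<Rightarrow> 'a"
  assumes "(2::'a) \<noteq> 0" and "n \<ge> 1"
  shows "\<not> (\<exists>e \<in> eacp_carrier n. \<forall>x \<in> eacp_carrier n.
              eacp_mult n a b e x = x \<and> eacp_mult n a b x e = x)"
  using eacp_no_left_unit[OF assms(2), of a b] by blast

end
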